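(* Let $z\in\mathbb{N}$, $z\ge1$, and let $\alpha\in\{0,1,2\}^*$ be the standard base-3 representation of $z$ (no leading zeros). Let $x_0<0$. In the limit configuration $c_\infty[\alpha]$, column $x_0$ contains a southmost cell $(x_0,y_b)$ whose sum bit is defined; its sum bit is $0$, all cells $(x_0,y)$ with $y_b<y\le|\alpha|$ are defined, and the base-$3'$ word $\gamma$ they give satisfies $[\![\gamma]\!]_{3'}=T^{|x_0|}(z)$.
   Context: The Collatz map $T:\mathbb{N}\to\mathbb{N}$ is $T(x)=x/2$ for even $x$ and $T(x)=(3x+1)/2$ for odd $x$. Notation: $E=(1,0)$, $W=(-1,0)$, $N=(0,1)$, $S=(0,-1)$ in $\mathbb{Z}^2$; $[P]\in\{0,1\}$ equals $1$ iff $P$ holds. Strings are indexed from the right: $\alpha=\alpha_{k-1}\cdots\alpha_0$; $[\![\alpha]\!]_3=\sum_i\alpha_i3^i$. Base $3'$: words over $\{0,\bar0,1,\bar1\}$ with trit values $0\mapsto0$, $\bar0\mapsto1$, $1\mapsto1$, $\bar1\mapsto2$, and $[\![\gamma]\!]_{3'}=\sum_i\mathrm{val}(\gamma_i)3^i$. The symbols $0,\bar0,1,\bar1$ are identified with the cell states $(0,0),(0,1),(1,0),(1,1)$. The encoding $\mathrm{enc}:\{0,1,2\}^*\to\{0,\bar0,1,\bar1\}^*$ acts symbol by symbol: $0\mapsto0$, $2\mapsto\bar1$, and a digit $\alpha_i=1$ maps to $1$ if there exists $j<i$ with $\alpha_j\ne1$ and the largest such $j$ has $\alpha_j=2$, and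 to $\bar0$ otherwise. A vertical contiguous segment of defined cells gives the base-$3'$ word formed by the cells' states read from north (most significant) to south (least significant). The CQCA. State set $\Sigma=\{0,1,\bot\}^2\setminus\{(\bot,0),(\bot,1)\}$; a state $(s,c)$ has sum bit $s$ and carry bit $c$; it is undefined if $(\bot,\bot)$, half-defined if $s\in\{0,1\},c=\bot$, defined if $s,c\in\{0,1\}$. One step $F(C)$ of a configuration $C:\mathbb{Z}^2\to\Sigma$: first the non-local rule gives $C'$: $C'(u)=(0,1)$ if $C(u+W)=(1,\bot)$, $C(u)\in\{(0,\bot),(\bot,\bot)\}$ and $C(u+iE)\in\{(0,\bot),(\bot,\bot)\}$ for all $i\ge1$; otherwise $C'(u)=C(u)$. Then the local rule on $C'$ at all cells simultaneously: (i) if $C'(u)=(s,\bot)$ half-defined and $C'(u+E)=(s',c')$ defined, $F(C)(u)=(s,[s+s'+c'\ge2])$; (ii) if $C'(u)=(\bot,\bot)$, $C'(u+N)=(s,\bot)$ half-defined and $C'(u+N+E)=(s',c')$ defined, $F(C)(u)=((s+s'+c')\bmod2,\bot)$; (iii) otherwise $F(C)(u)=C'(u)$. For $\alpha\in\{0,1,2\}^*$ with $\gamma=\mathrm{enc}(\alpha)$, the initial configuration $c_0[\alpha]$ is: $c_0[\alpha](0,i)=\gamma_{i-1}$ for $1\le i\le|\alpha|$, $c_0[\alpha](x,|\alpha|)=(0,\bot)$ for all $x<0$, and $(\bot,\bot)$ elsewhere. Each cell's state in $F^i(c_0[\alpha])$ is eventually constant; $c_\infty[\alpha]$ is the pointwise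 limit. *)

theory Defs
  imports Main
begin

definition collatzT :: "nat \<Rightarrow> nat" where
  "collatzT x = (if even x then x div 2 else (3 * x + 1) div 2)"

(* A cell state is a pair (sum bit, carry bit); each bit is Some 0, Some 1, or None (= \<bottom>). *)
type_synonym cell = "nat option \<times> nat option"
type_synonym config = "int \<times> int \<Rightarrow> cell"

definition val3 :: "nat list \<Rightarrow> nat" where
  "val3 \<alpha> = (\<Sum>i<length \<alpha>. \<alpha> ! i * 3 ^ i)"

(* trit value of a defined cell: 0 -> 0, 0bar=(0,1) -> 1, 1=(1,0) -> 1, 1bar=(1,1) -> 2 *)
definition tval :: "cell \<Rightarrow> nat" where
  "tval c = the (fst c) + the (snd c)"

definition enc :: "nat list \<Rightarrow> nat \<Rightarrow> cell" where
  "enc \<alpha> i =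
     (if \<alpha> ! i = 0 then (Some 0, Some 0)
      else if \<alpha> ! i = 2 then (Some 1, Some 1)
      else if (\<exists>j<i. \<alpha> ! j \<noteq> 1) \<and> \<alpha> ! (GREATEST j. j < i \<and> \<alpha> ! j \<noteq> 1) = 2
           then (Some 1, Some 0)
      else (Some 0, Some 1))"

definition c0 :: "nat list \<Rightarrow> config" where
  "c0 \<alpha> = (\<lambda>(x, y).
     if x = 0 \<and> 1 \<le> y \<and> y \<le> int (length \<alpha>) then enc \<alpha> (nat (y - 1))
     else if x < 0 \<and> y = int (length \<alpha>) then (Some 0, None)
     else (None, None))"

definition nonlocal_step :: "config \<Rightarrow> config" where
  "nonlocal_step C = (\<lambda>(x, y).
     if C (x - 1, y) = (Some 1, None)
        \<and> C (x, y) \<in> {(Some 0, None), (None, None)}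
        \<and> (\<forall>i::int. i \<ge> 1 \<longrightarrow> C (x + i, y) \<in> {(Some 0, None), (None, None)})
     then (Some 0, Some 1) else C (x, y))"

definition local_step :: "config \<Rightarrow> config" where
  "local_step C = (\<lambda>(x, y).
     (case C (x, y) of
        (Some s, None) \<Rightarrow>
          (case C (x + 1, y) of
             (Some s', Some c') \<Rightarrow> (Some s, Some (if s + s' + c' \<ge> 2 then 1 else 0))
           | _ \<Rightarrow> C (x, y))
      | (None, None) \<Rightarrow>
          (case (C (x, y + 1), C (x + 1, y + 1)) of
             ((Some s, None), (Some s', Some c')) \<Rightarrow> (Some ((s + s' + c') mod 2), None)
           | _ \<Rightarrow> C (x, y))
      | _ \<Rightarrow> C (x, y)))"

definition cqca_step :: "config \<Rightarrow> config" where
  "cqca_step C = local_step (nonlocal_step C)"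

(* pointwise limit of the orbit (each cell is eventually constant) *)
definition c_inf :: "nat list \<Rightarrow> config" where
  "c_inf \<alpha> = (\<lambda>u. THE v. \<exists>n0. \<forall>n\<ge>n0. (cqca_step ^^ n) (c0 \<alpha>) u = v)"

end

(*
  The passage from column -k to
  column -(k+1) is long division by 2 in base 3, most significant trit first: the sum bit of
  a cell is the parity of the number formed by the trits above it (the running remainder),
  and sum bit plus carry bit is the corresponding trit of the quotient. When T^k(z) is odd,
  the non-local rule first appends the trit 1 below column -k, so that the dividend becomes
  3 T^k(z) + 1 and the next column is one cell longer. The configuration after n steps has an
  explicit closed form, a wavefront moving along anti-diagonals, which both rules preserve;
  its limit is read off cell by cell.
*)
theory Submission
  imports Defs
begin

section \<open>Long division by two in base 3\<close>

fun horner3 :: "(nat \<Rightarrow> nat) \<Rightarrow> nat \<Rightarrow> nat" where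
  "horner3 t 0 = 0"
| "horner3 t (Suc n) = 3 * horner3 t n + t n"

lemma horner3_cong: "(\<And>d. d < n \<Longrightarrow> t d = t' d) \<Longrightarrow> horner3 t n = horner3 t' n"
  by (induction n) auto

lemma horner3_eq_sum: "horner3 t n = (\<Sum>d<n. t d * 3 ^ (n - 1 - d))"
proof (induction n)
  case (Suc n)
  have "(\<Sum>d<n. t d * 3 ^ (Suc n - 1 - d)) = 3 * (\<Sum>d<n. t d * 3 ^ (n - 1 - d))"
    unfolding sum_distrib_left
    by (rule sum.cong) (auto simp: Suc_diff_Suc power_Suc[symmetric] simp del: power_Suc)
  then show ?case using Suc by simp
qed simp

definition halving_cell :: "(nat \<Rightarrow> nat) \<Rightarrow> nat \<Rightarrow> nat \<times> nat" where
  "halving_cell t d = (horner3 t d mod 2, (horner3 t d mod 2 + t d) div 2)"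

lemma horner3_halving:
  "horner3 (\<lambda>d. fst (halving_cell t d) + snd (halving_cell t d)) n = horner3 t n div 2"
  by (induction n) (auto simp: halving_cell_def, presburger)

section \<open>The limit columns\<close>

abbreviation collatz_orbit :: "nat list \<Rightarrow> nat \<Rightarrow> nat" where
  "collatz_orbit \<alpha> k \<equiv> (collatzT ^^ k) (val3 \<alpha>)"

fun col_height :: "nat list \<Rightarrow> nat \<Rightarrow> nat" where
  "col_height \<alpha> 0 = length \<alpha>"
| "col_height \<alpha> (Suc k) = col_height \<alpha> k + (if odd (collatz_orbit \<alpha> k) then 1 else 0)"

lemma col_height_ge: "length \<alpha> \<le> col_height \<alpha> k"
  by (induction k) auto

lemma col_height_mono: "j \<le> k \<Longrightarrow> col_height \<alpha> j \<le> col_height \<alpha> k"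
  by (induction k) (auto simp: le_Suc_eq)

lemma col_height_eq_imp_even:
  "j < k \<Longrightarrow> col_height \<alpha> j = col_height \<alpha> k \<Longrightarrow> even (collatz_orbit \<alpha> j)"
  using col_height_mono[of "Suc j" k \<alpha>] col_height_mono[of j k \<alpha>] by (auto split: if_splits)

text \<open>The dividend of the next column: the trits of a column of height h, followed by the
  trit b = T^k(z) mod 2 injected below it by the non-local rule.\<close>

definition column_input :: "(nat \<Rightarrow> nat \<times> nat) \<Rightarrow> nat \<Rightarrow> nat \<Rightarrow> nat \<Rightarrow> nat" where
  "column_input c h b d = (if d < h then fst (c d) + snd (c d) else if d = h then b else 0)"

text \<open>column \<alpha> k d is the (sum bit, carry bit) of the limit cell at x = -k, y = |\<alpha>| - d.\<close>

primrec column :: "nat list \<Rightarrow> nat \<Rightarrow> nat \<Rightarrow> nat \<times> nat" where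
  "column \<alpha> 0 = (\<lambda>d. (the (fst (enc \<alpha> (length \<alpha> - 1 - d))), the (snd (enc \<alpha> (length \<alpha> - 1 - d)))))"
| "column \<alpha> (Suc k) =
     halving_cell (column_input (column \<alpha> k) (col_height \<alpha> k) (collatz_orbit \<alpha> k mod 2))"

definition column_trits :: "nat list \<Rightarrow> nat \<Rightarrow> nat \<Rightarrow> nat" where
  "column_trits \<alpha> k = column_input (column \<alpha> k) (col_height \<alpha> k) (collatz_orbit \<alpha> k mod 2)"

lemma column_Suc: "column \<alpha> (Suc k) = halving_cell (column_trits \<alpha> k)"
  by (simp add: column_trits_def)

declare column.simps(2) [simp del]

lemma column_trits_below:
  "d < col_height \<alpha> k \<Longrightarrow> column_trits \<alpha> k d = fst (column \<alpha> k d) + snd (column \<alpha> k d)"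
  by (simp add: column_trits_def column_input_def)

lemma column_trits_bottom: "column_trits \<alpha> k (col_height \<alpha> k) = collatz_orbit \<alpha> k mod 2"
  by (simp add: column_trits_def column_input_def)

lemma column_bits_le_1: "fst (column \<alpha> k d) \<le> 1 \<and> snd (column \<alpha> k d) \<le> 1"
proof (induction k arbitrary: d)
  case 0
  then show ?case by (simp add: enc_def)
next
  case (Suc k)
  have "column_trits \<alpha> k d \<le> 2"
    using Suc.IH[of d] by (simp add: column_trits_def column_input_def)
  then show ?case by (simp add: column_Suc halving_cell_def) presburger
qed

lemma sum_bit_top: "fst (column \<alpha> (Suc k) 0) = 0"
  by (simp add: column_Suc halving_cell_def)

lemma sum_bit_Suc:
  "fst (column \<alpha> (Suc j) (Suc d)) = (fst (column \<alpha> (Suc j) d) + column_trits \<alpha> j d) mod 2"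
  by (simp add: column_Suc halving_cell_def) presburger

lemma carry_bit_Suc:
  "snd (column \<alpha> (Suc j) d) = (fst (column \<alpha> (Suc j) d) + column_trits \<alpha> j d) div 2"
  by (simp add: column_Suc halving_cell_def)

lemma horner3_column_Suc:
  assumes IH: "horner3 (column_trits \<alpha> k) (col_height \<alpha> k) = collatz_orbit \<alpha> k"
  shows "horner3 (column_trits \<alpha> (Suc k)) (col_height \<alpha> (Suc k)) = collatz_orbit \<alpha> (Suc k)"
    and "fst (column \<alpha> (Suc k) (col_height \<alpha> (Suc k))) = 0"
proof -
  let ?t = "column_trits \<alpha> k" and ?h = "col_height \<alpha> k" and ?v = "collatz_orbit \<alpha> k"
  let ?h' = "col_height \<alpha> (Suc k)"
  have rem: "fst (column \<alpha> (Suc k) ?h') = horner3 ?t ?h' mod 2"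
    by (simp add: column_Suc halving_cell_def)
  have "horner3 (column_trits \<alpha> (Suc k)) ?h'
      = horner3 (\<lambda>d. fst (halving_cell ?t d) + snd (halving_cell ?t d)) ?h'"
    by (rule horner3_cong) (simp add: column_trits_below column_Suc)
  also have "\<dots> = horner3 ?t ?h' div 2" by (rule horner3_halving)
  finally have quot: "horner3 (column_trits \<alpha> (Suc k)) ?h' = horner3 ?t ?h' div 2" .
  have "horner3 ?t ?h' = (if odd ?v then 3 * ?v + 1 else ?v)"
    using IH column_trits_bottom[of \<alpha> k] by (auto simp: odd_iff_mod_2_eq_one)
  then show "horner3 (column_trits \<alpha> (Suc k)) ?h' = collatz_orbit \<alpha> (Suc k)"
    and "fst (column \<alpha> (Suc k) ?h') = 0"
    using quot rem by (auto simp: collatzT_def)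
qed

locale base3_word =
  fixes \<alpha> :: "nat list"
  assumes digits_lt_3: "\<forall>d\<in>set \<alpha>. d < 3" and nonempty: "\<alpha> \<noteq> []"
begin

lemma col_height_pos: "0 < col_height \<alpha> k"
  using col_height_ge[of \<alpha> k] nonempty by (cases \<alpha>) auto

lemma horner3_column_0: "horner3 (column_trits \<alpha> 0) (col_height \<alpha> 0) = val3 \<alpha>"
proof -
  let ?L = "length \<alpha>"
  have "horner3 (column_trits \<alpha> 0) ?L = (\<Sum>d<?L. \<alpha> ! (?L - 1 - d) * 3 ^ (?L - 1 - d))"
  proof (unfold horner3_eq_sum, rule sum.cong)
    fix d assume "d \<in> {..<?L}"
    then have "\<alpha> ! (?L - 1 - d) < 3" using digits_lt_3 by auto
    then show "column_trits \<alpha> 0 d * 3 ^ (?L - 1 - d) = \<alpha> ! (?L - 1 - d) * 3 ^ (?L - 1 - d)"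
      using \<open>d \<in> {..<?L}\<close> by (auto simp: column_trits_def column_input_def enc_def)
  qed simp
  also have "\<dots> = val3 \<alpha>"
    using sum.nat_diff_reindex[of "\<lambda>i. \<alpha> ! i * 3 ^ i" ?L] by (simp add: val3_def)
  finally show ?thesis by simp
qed

lemma horner3_column: "horner3 (column_trits \<alpha> k) (col_height \<alpha> k) = collatz_orbit \<alpha> k"
proof (induction k)
  case 0
  then show ?case using horner3_column_0 by simp
next
  case (Suc k)
  then show ?case by (rule horner3_column_Suc)
qed

lemma sum_bit_bottom: "0 < k \<Longrightarrow> fst (column \<alpha> k (col_height \<alpha> k)) = 0"
  using horner3_column_Suc(2)[OF horner3_column] by (metis gr0_conv_Suc)

lemma sum_bit_below_previous: "fst (column \<alpha> (Suc k) (col_height \<alpha> k)) = collatz_orbit \<alpha> k mod 2"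
  using horner3_column by (simp add: column_Suc halving_cell_def)

end

section \<open>Closed form of the orbit\<close>

text \<open>The cell at x = -k, y = |\<alpha>| - d after n steps (e = 1), or after the non-local rule of
  step n + 1 (e = 0). In column -k the sum bit at depth d > 0 appears at time d + k - 1 and
  the carry bit at time d + k; at depth col_height \<alpha> k the non-local rule injects (0,1) at
  time d + k when T^k(z) is odd.\<close>

definition orbit_cell :: "nat list \<Rightarrow> nat \<Rightarrow> nat \<Rightarrow> nat \<Rightarrow> nat \<Rightarrow> cell" where
  "orbit_cell \<alpha> e n k d =
    (if d < col_height \<alpha> k then
       (if k = 0 \<or> d = 0 \<or> d + k \<le> n + 1
        then (Some (fst (column \<alpha> k d)), if k = 0 \<or> d + k \<le> n then Some (snd (column \<alpha> k d)) else None)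
        else (None, None))
     else if d = col_height \<alpha> k then
       (if odd (collatz_orbit \<alpha> k) \<and> d + k + e \<le> n then (Some 0, Some 1)
        else if k \<noteq> 0 \<and> d + k \<le> n + 1 then (Some 0, None) else (None, None))
     else (None, None))"

lemma orbit_cell_inside:
  "d < col_height \<alpha> k \<Longrightarrow> orbit_cell \<alpha> e n k d =
     (if k = 0 \<or> d = 0 \<or> d + k \<le> n + 1
      then (Some (fst (column \<alpha> k d)), if k = 0 \<or> d + k \<le> n then Some (snd (column \<alpha> k d)) else None)
      else (None, None))"
  by (simp add: orbit_cell_def)

lemma orbit_cell_bottom:
  "d = col_height \<alpha> k \<Longrightarrow> orbit_cell \<alpha> e n k d =
     (if odd (collatz_orbit \<alpha> k) \<and> d + k + e \<le> n then (Some 0, Some 1)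
      else if k \<noteq> 0 \<and> d + k \<le> n + 1 then (Some 0, None) else (None, None))"
  by (simp add: orbit_cell_def)

lemma orbit_cell_outside: "col_height \<alpha> k < d \<Longrightarrow> orbit_cell \<alpha> e n k d = (None, None)"
  by (simp add: orbit_cell_def)

definition orbit_conf :: "nat list \<Rightarrow> nat \<Rightarrow> nat \<Rightarrow> config" where
  "orbit_conf \<alpha> e n = (\<lambda>(x, y). if 0 < x \<or> int (length \<alpha>) < y then (None, None)
     else orbit_cell \<alpha> e n (nat (- x)) (nat (int (length \<alpha>) - y)))"

definition local_rule :: "cell \<Rightarrow> cell \<Rightarrow> cell \<Rightarrow> cell \<Rightarrow> cell" where
  "local_rule c east north northeast = (case c of
        (Some s, None) \<Rightarrow>
          (case east of
             (Some s', Some c') \<Rightarrow> (Some s, Some (if s + s' + c' \<ge> 2 then 1 else 0))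
           | _ \<Rightarrow> c)
      | (None, None) \<Rightarrow>
          (case (north, northeast) of
             ((Some s, None), (Some s', Some c')) \<Rightarrow> (Some ((s + s' + c') mod 2), None)
           | _ \<Rightarrow> c)
      | _ \<Rightarrow> c)"

lemma local_step_eq_local_rule:
  "local_step C (x, y) = local_rule (C (x, y)) (C (x + 1, y)) (C (x, y + 1)) (C (x + 1, y + 1))"
  by (simp add: local_step_def local_rule_def)

lemma local_rule_defined [simp]: "local_rule (Some a, Some b) east north northeast = (Some a, Some b)"
  by (simp add: local_rule_def)

lemma local_rule_carry [simp]:
  "local_rule (Some s, None) (Some s', Some c') north northeast
     = (Some s, Some (if s + s' + c' \<ge> 2 then 1 else 0))"
  by (simp add: local_rule_def)

lemma local_rule_half_defined [simp]:
  "local_rule (Some s, None) (None, None) north northeast = (Some s, None)"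
  "local_rule (Some s, None) (Some s', None) north northeast = (Some s, None)"
  by (simp_all add: local_rule_def)

lemma local_rule_sum [simp]:
  "local_rule (None, None) east (Some s, None) (Some s', Some c') = (Some ((s + s' + c') mod 2), None)"
  by (simp add: local_rule_def)

lemma local_rule_undefined [simp]:
  "local_rule (None, None) east (None, None) northeast = (None, None)"
  "local_rule (None, None) east north (None, None) = (None, None)"
  "local_rule (None, None) east north (Some s', None) = (None, None)"
  "local_rule (None, None) east (Some s, Some c) northeast = (None, None)"
  by (auto simp: local_rule_def split: option.splits prod.splits)

abbreviation idle_cells :: "cell set" where
  "idle_cells \<equiv> {(Some 0, None), (None, None)}"

lemma carry_as_div_2:
  "a \<le> 1 \<Longrightarrow> b \<le> 1 \<Longrightarrow> c \<le> 1 \<Longrightarrow> (if 2 \<le> a + b + c then 1 else (0::nat)) = (a + (b + c)) div 2"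
  "b \<le> 1 \<Longrightarrow> c \<le> 1 \<Longrightarrow> (if 2 \<le> b + c then 1 else (0::nat)) = (b + c) div 2"
  by (cases a; cases b; cases c; simp)+

lemma orbit_cell_below_later_bottom:
  assumes "j < k"
  shows "orbit_cell \<alpha> e n j (col_height \<alpha> k) \<in> idle_cells"
proof (cases "col_height \<alpha> j < col_height \<alpha> k")
  case True
  then show ?thesis by (simp add: orbit_cell_outside)
next
  case False
  then have "col_height \<alpha> j = col_height \<alpha> k" using col_height_mono[of j k \<alpha>] assms by simp
  moreover from this have "even (collatz_orbit \<alpha> j)" using col_height_eq_imp_even assms by blast
  ultimately show ?thesis by (simp add: orbit_cell_bottom)
qed

lemma orbit_cell_local_column_0:
  "orbit_cell \<alpha> 1 (Suc n) 0 d = local_rule (orbit_cell \<alpha> 0 n 0 d) (None, None) north (None, None)"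
  by (rule linorder_cases[of d "col_height \<alpha> 0"])
    (simp_all add: orbit_cell_inside orbit_cell_bottom orbit_cell_outside)

context base3_word
begin

lemma orbit_cell_local_top:
  "orbit_cell \<alpha> 1 (Suc n) (Suc j) 0
     = local_rule (orbit_cell \<alpha> 0 n (Suc j) 0) (orbit_cell \<alpha> 0 n j 0) north northeast"
proof -
  have hpos: "0 < col_height \<alpha> (Suc j)" "0 < col_height \<alpha> j" by (rule col_height_pos)+
  consider "Suc j \<le> n" | "n = j" | "n < j" by linarith
  then show ?thesis
  proof cases
    case 2
    have "column_trits \<alpha> j 0 = fst (column \<alpha> j 0) + snd (column \<alpha> j 0)"
      using hpos by (simp add: column_trits_below)
    then show ?thesis
      using 2 hpos column_bits_le_1[of \<alpha> j 0]
      by (simp add: orbit_cell_inside column_Suc halving_cell_def carry_as_div_2)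
  qed (use hpos in \<open>simp_all add: orbit_cell_inside\<close>)
qed

lemma orbit_cell_local_inside:
  assumes inside: "Suc d < col_height \<alpha> (Suc j)"
  shows "orbit_cell \<alpha> 1 (Suc n) (Suc j) (Suc d)
     = local_rule (orbit_cell \<alpha> 0 n (Suc j) (Suc d)) (orbit_cell \<alpha> 0 n j (Suc d))
         (orbit_cell \<alpha> 0 n (Suc j) d) (orbit_cell \<alpha> 0 n j d)"
proof -
  let ?hj = "col_height \<alpha> j" and ?v = "collatz_orbit \<alpha> j"
  have h_Suc: "col_height \<alpha> (Suc j) = ?hj + (if odd ?v then 1 else 0)" by simp
  have d_hj: "d < ?hj" using inside h_Suc by (auto split: if_splits)
  have bits: "fst (column \<alpha> i d') \<le> 1" "snd (column \<alpha> i d') \<le> 1" for i d'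
    using column_bits_le_1 by blast+
  consider "Suc d + Suc j \<le> n" | "Suc d + Suc j = n + 1" | "Suc d + Suc j = n + 2"
    | "n + 2 < Suc d + Suc j" by linarith
  then show ?thesis
  proof cases
    case 1
    then show ?thesis using inside by (simp add: orbit_cell_inside)
  next
    case 2
    show ?thesis
    proof (cases "Suc d < ?hj")
      case True
      then show ?thesis
        using 2 inside bits[of j "Suc d"] bits[of "Suc j" "Suc d"] carry_bit_Suc[of \<alpha> j "Suc d"]
        by (simp add: orbit_cell_inside column_trits_below carry_as_div_2)
    next
      case False
      then have "Suc d = ?hj" "odd ?v" using inside h_Suc by (auto split: if_splits)
      then have "column_trits \<alpha> j (Suc d) = 1"
        using column_trits_bottom[of \<alpha> j] by (simp add: odd_iff_mod_2_eq_one)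
      then show ?thesis
        using 2 inside \<open>Suc d = ?hj\<close> \<open>odd ?v\<close> bits[of "Suc j" "Suc d"] carry_bit_Suc[of \<alpha> j "Suc d"]
        by (cases "fst (column \<alpha> (Suc j) (Suc d)) = 0") (auto simp: orbit_cell_inside orbit_cell_bottom)
    qed
  next
    case 3
    have "orbit_cell \<alpha> 0 n (Suc j) d = (Some (fst (column \<alpha> (Suc j) d)), None)"
      "orbit_cell \<alpha> 0 n j d = (Some (fst (column \<alpha> j d)), Some (snd (column \<alpha> j d)))"
      using 3 inside d_hj by (simp_all add: orbit_cell_inside)
    then show ?thesis
      using 3 inside d_hj sum_bit_Suc[of \<alpha> j d] by (simp add: orbit_cell_inside column_trits_below add.assoc)
  next
    case 4
    have cell: "orbit_cell \<alpha> 0 n (Suc j) (Suc d) = (None, None)"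
      "orbit_cell \<alpha> 1 (Suc n) (Suc j) (Suc d) = (None, None)"
      using 4 inside by (simp_all add: orbit_cell_inside)
    show ?thesis
    proof (cases "d = 0")
      case True
      have "orbit_cell \<alpha> 0 n j d = (Some (fst (column \<alpha> j d)), None)"
        using d_hj 4 True by (simp add: orbit_cell_inside)
      then show ?thesis using cell by simp
    next
      case False
      have "orbit_cell \<alpha> 0 n (Suc j) d = (None, None)"
        using inside 4 False by (simp add: orbit_cell_inside)
      then show ?thesis using cell by simp
    qed
  qed
qed

lemma orbit_cell_local_bottom:
  assumes bottom: "Suc d = col_height \<alpha> (Suc j)"
  shows "orbit_cell \<alpha> 1 (Suc n) (Suc j) (Suc d)
     = local_rule (orbit_cell \<alpha> 0 n (Suc j) (Suc d)) (orbit_cell \<alpha> 0 n j (Suc d))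
         (orbit_cell \<alpha> 0 n (Suc j) d) (orbit_cell \<alpha> 0 n j d)"
proof -
  let ?hj = "col_height \<alpha> j" and ?v = "collatz_orbit \<alpha> j" and ?k = "Suc j"
  have h_Suc: "col_height \<alpha> ?k = ?hj + (if odd ?v then 1 else 0)" by simp
  have d_hj: "d \<le> ?hj" using bottom h_Suc by (auto split: if_splits)
  have east: "orbit_cell \<alpha> 0 n j (Suc d) \<in> idle_cells"
    using orbit_cell_below_later_bottom[of j ?k] bottom by simp
  consider "odd (collatz_orbit \<alpha> ?k) \<and> Suc d + ?k \<le> n"
    | "\<not> (odd (collatz_orbit \<alpha> ?k) \<and> Suc d + ?k \<le> n)" "Suc d + ?k \<le> n + 1"
    | "Suc d + ?k = n + 2" | "n + 2 < Suc d + ?k" by linarith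
  then show ?thesis
  proof cases
    case 1
    then show ?thesis using bottom by (simp add: orbit_cell_bottom)
  next
    case 2
    have "orbit_cell \<alpha> 0 n ?k (Suc d) = (Some 0, None)" "orbit_cell \<alpha> 1 (Suc n) ?k (Suc d) = (Some 0, None)"
      using bottom 2 by (simp_all add: orbit_cell_bottom)
    then show ?thesis using east by auto
  next
    case 3
    have north: "orbit_cell \<alpha> 0 n ?k d = (Some (fst (column \<alpha> ?k d)), None)"
      using bottom 3 by (simp add: orbit_cell_inside)
    obtain s' c' where northeast: "orbit_cell \<alpha> 0 n j d = (Some s', Some c')"
      and trit: "column_trits \<alpha> j d = s' + c'"
    proof (cases "d < ?hj")
      case True
      then show ?thesis using that 3 by (simp add: orbit_cell_inside column_trits_below)
    next
      case False
      then have "d = ?hj" "odd ?v" using d_hj bottom h_Suc by (auto split: if_splits)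
      then show ?thesis
        using that 3 column_trits_bottom[of \<alpha> j] by (simp add: orbit_cell_bottom odd_iff_mod_2_eq_one)
    qed
    have "(fst (column \<alpha> ?k d) + s' + c') mod 2 = 0"
      using sum_bit_Suc[of \<alpha> j d] sum_bit_bottom[of ?k] bottom trit by (simp add: add.assoc)
    then show ?thesis
      using 3 bottom north northeast by (simp add: orbit_cell_bottom)
  next
    case 4
    have cell: "orbit_cell \<alpha> 0 n ?k (Suc d) = (None, None)" "orbit_cell \<alpha> 1 (Suc n) ?k (Suc d) = (None, None)"
      using bottom 4 by (simp_all add: orbit_cell_bottom)
    show ?thesis
    proof (cases "d = 0")
      case True
      have "orbit_cell \<alpha> 0 n j d = (Some (fst (column \<alpha> j d)), None)"
        using col_height_pos[of j] 4 True by (simp add: orbit_cell_inside)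
      then show ?thesis using cell by simp
    next
      case False
      have "orbit_cell \<alpha> 0 n ?k d = (None, None)"
        using bottom 4 False by (simp add: orbit_cell_inside)
      then show ?thesis using cell by simp
    qed
  qed
qed

lemma orbit_cell_local_outside:
  assumes outside: "col_height \<alpha> (Suc j) < Suc d"
  shows "orbit_cell \<alpha> 1 (Suc n) (Suc j) (Suc d)
     = local_rule (orbit_cell \<alpha> 0 n (Suc j) (Suc d)) (orbit_cell \<alpha> 0 n j (Suc d))
         (orbit_cell \<alpha> 0 n (Suc j) d) (orbit_cell \<alpha> 0 n j d)"
proof -
  have cell: "orbit_cell \<alpha> 0 n (Suc j) (Suc d) = (None, None)"
    "orbit_cell \<alpha> 1 (Suc n) (Suc j) (Suc d) = (None, None)"
    using outside by (simp_all add: orbit_cell_outside)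
  show ?thesis
  proof (cases "col_height \<alpha> (Suc j) < d")
    case True
    then have "orbit_cell \<alpha> 0 n (Suc j) d = (None, None)" by (simp add: orbit_cell_outside)
    then show ?thesis using cell by simp
  next
    case False
    then have "d = col_height \<alpha> (Suc j)" using outside by simp
    then have "orbit_cell \<alpha> 0 n j d \<in> idle_cells"
      using orbit_cell_below_later_bottom[of j "Suc j"] by simp
    then show ?thesis using cell by auto
  qed
qed

lemma orbit_cell_local_column_Suc:
  "orbit_cell \<alpha> 1 (Suc n) (Suc j) d = local_rule (orbit_cell \<alpha> 0 n (Suc j) d) (orbit_cell \<alpha> 0 n j d)
     (if d = 0 then (None, None) else orbit_cell \<alpha> 0 n (Suc j) (d - 1))
     (if d = 0 then (None, None) else orbit_cell \<alpha> 0 n j (d - 1))"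
proof (cases d)
  case 0
  then show ?thesis using orbit_cell_local_top by simp
next
  case (Suc d')
  consider "Suc d' < col_height \<alpha> (Suc j)" | "Suc d' = col_height \<alpha> (Suc j)"
    | "col_height \<alpha> (Suc j) < Suc d'" by linarith
  then have "orbit_cell \<alpha> 1 (Suc n) (Suc j) (Suc d') = local_rule (orbit_cell \<alpha> 0 n (Suc j) (Suc d'))
      (orbit_cell \<alpha> 0 n j (Suc d')) (orbit_cell \<alpha> 0 n (Suc j) d') (orbit_cell \<alpha> 0 n j d')"
    by cases (erule orbit_cell_local_inside orbit_cell_local_bottom orbit_cell_local_outside)+
  then show ?thesis using Suc by simp
qed

lemma local_step_orbit_conf: "local_step (orbit_conf \<alpha> 0 n) = orbit_conf \<alpha> 1 (Suc n)"
proof (rule ext, clarify)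
  fix x y :: int
  let ?L = "int (length \<alpha>)" and ?C = "orbit_conf \<alpha> 0 n"
  show "local_step ?C (x, y) = orbit_conf \<alpha> 1 (Suc n) (x, y)"
  proof (cases "0 < x \<or> ?L < y")
    case True
    then show ?thesis by (auto simp: local_step_eq_local_rule orbit_conf_def)
  next
    case False
    define d where "d = nat (?L - y)"
    have d_north: "nat (?L - (y + 1)) = d - 1" unfolding d_def by arith
    have north: "?C (x, y + 1) = (if d = 0 then (None, None) else orbit_cell \<alpha> 0 n (nat (- x)) (d - 1))"
      using False d_north by (auto simp: orbit_conf_def d_def)
    show ?thesis
    proof (cases "x = 0")
      case True
      then show ?thesis using False orbit_cell_local_column_0
        by (simp add: local_step_eq_local_rule orbit_conf_def)
    next
      case x_neg: False
      define j where "j = nat (- x - 1)"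
      have k: "nat (- x) = Suc j" using False x_neg unfolding j_def by arith
      have "?C (x + 1, y) = orbit_cell \<alpha> 0 n j d"
        "?C (x + 1, y + 1) = (if d = 0 then (None, None) else orbit_cell \<alpha> 0 n j (d - 1))"
        "?C (x, y) = orbit_cell \<alpha> 0 n (Suc j) d"
        "orbit_conf \<alpha> 1 (Suc n) (x, y) = orbit_cell \<alpha> 1 (Suc n) (Suc j) d"
        using False x_neg k d_north by (auto simp: orbit_conf_def j_def d_def)
      then show ?thesis
        using north k orbit_cell_local_column_Suc by (simp add: local_step_eq_local_rule)
    qed
  qed
qed

end

definition nonlocal_fires :: "config \<Rightarrow> int \<Rightarrow> int \<Rightarrow> bool" where
  "nonlocal_fires C x y \<longleftrightarrow> C (x - 1, y) = (Some 1, None) \<and> C (x, y) \<in> idle_cells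
     \<and> (\<forall>i::int. i \<ge> 1 \<longrightarrow> C (x + i, y) \<in> idle_cells)"

lemma nonlocal_step_eq:
  "nonlocal_step C (x, y) = (if nonlocal_fires C x y then (Some 0, Some 1) else C (x, y))"
  by (simp add: nonlocal_step_def nonlocal_fires_def)

lemma orbit_cell_half_one:
  assumes "orbit_cell \<alpha> 1 n k d = (Some 1, None)"
  shows "k \<noteq> 0 \<and> d < col_height \<alpha> k \<and> n + 1 = d + k"
proof (rule linorder_cases[of d "col_height \<alpha> k"])
  assume inside: "d < col_height \<alpha> k"
  then have "k \<noteq> 0" using assms by (auto simp: orbit_cell_inside split: if_splits)
  then obtain j where "k = Suc j" using not0_implies_Suc by blast
  then show ?thesis using assms inside sum_bit_top[of \<alpha> j]
    by (cases d) (auto simp: orbit_cell_inside split: if_splits)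
qed (use assms in \<open>auto simp: orbit_cell_bottom orbit_cell_outside split: if_splits\<close>)

lemma orbit_cell_idle_at_front:
  assumes "orbit_cell \<alpha> 1 (d + k) k d \<in> idle_cells" and "d < col_height \<alpha> (Suc k)"
  shows "d = col_height \<alpha> k \<and> odd (collatz_orbit \<alpha> k)"
proof -
  have "\<not> d < col_height \<alpha> k" using assms(1) by (auto simp: orbit_cell_inside)
  then show ?thesis using assms(2) by (auto split: if_splits)
qed

lemma orbit_cell_phases_differ:
  assumes "orbit_cell \<alpha> 0 n k d \<noteq> orbit_cell \<alpha> 1 n k d"
  shows "d = col_height \<alpha> k \<and> odd (collatz_orbit \<alpha> k) \<and> n = d + k"
  using assms by (auto simp: orbit_cell_def split: if_splits)

context base3_word
begin

lemma orbit_conf_fires_iff: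
  fixes x y :: int
  defines "k \<equiv> nat (- x)" and "d \<equiv> nat (int (length \<alpha>) - y)"
  shows "nonlocal_fires (orbit_conf \<alpha> 1 n) x y \<longleftrightarrow>
     x \<le> 0 \<and> y \<le> int (length \<alpha>) \<and> d = col_height \<alpha> k \<and> odd (collatz_orbit \<alpha> k) \<and> n = d + k"
    (is "?fires \<longleftrightarrow> ?front")
proof
  let ?C = "orbit_conf \<alpha> 1 n"
  assume ?fires
  then have west: "?C (x - 1, y) = (Some 1, None)" and here: "?C (x, y) \<in> idle_cells"
    by (auto simp: nonlocal_fires_def)
  have y: "y \<le> int (length \<alpha>)" and "x - 1 \<le> 0" using west by (auto simp: orbit_conf_def split: if_splits)
  then have "orbit_cell \<alpha> 1 n (nat (- (x - 1))) d = (Some 1, None)"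
    using west by (simp add: orbit_conf_def d_def)
  from orbit_cell_half_one[OF this]
  have "x \<le> 0" and "d < col_height \<alpha> (nat (- (x - 1)))" and "n + 1 = d + nat (- (x - 1))"
    by auto
  moreover from \<open>x \<le> 0\<close> have "nat (- (x - 1)) = Suc k" by (simp add: k_def)
  ultimately have x: "x \<le> 0" and "d < col_height \<alpha> (Suc k)" and "n = d + k" by auto
  moreover have "orbit_cell \<alpha> 1 (d + k) k d \<in> idle_cells"
    using here x y \<open>n = d + k\<close> by (simp add: orbit_conf_def k_def d_def)
  ultimately show ?front using y orbit_cell_idle_at_front by blast
next
  assume ?front
  then have x: "x \<le> 0" and y: "y \<le> int (length \<alpha>)" and d: "d = col_height \<alpha> k"
    and odd: "odd (collatz_orbit \<alpha> k)" and n: "n = d + k" by auto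
  have "nat (- (x - 1)) = Suc k" using x by (simp add: k_def)
  moreover have "d < col_height \<alpha> (Suc k)" using d odd by simp
  moreover have "fst (column \<alpha> (Suc k) d) = 1"
    using sum_bit_below_previous[of k] d odd by (simp add: odd_iff_mod_2_eq_one)
  ultimately have west: "orbit_conf \<alpha> 1 n (x - 1, y) = (Some 1, None)"
    using x y n by (simp add: orbit_conf_def d_def orbit_cell_inside)
  have here: "orbit_conf \<alpha> 1 n (x, y) \<in> idle_cells"
    using x y d n by (simp add: orbit_conf_def k_def d_def orbit_cell_bottom)
  have east: "orbit_conf \<alpha> 1 n (x + i, y) \<in> idle_cells" if "i \<ge> 1" for i
  proof (cases "0 < x + i")
    case False
    then have "nat (- (x + i)) < k" using that x by (simp add: k_def)
    then show ?thesis
      using False y d orbit_cell_below_later_bottom by (simp add: orbit_conf_def d_def)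
  qed (simp add: orbit_conf_def)
  show ?fires using west here east by (simp add: nonlocal_fires_def)
qed

lemma nonlocal_step_orbit_conf: "nonlocal_step (orbit_conf \<alpha> 1 n) = orbit_conf \<alpha> 0 n"
proof (rule ext, clarify)
  fix x y :: int
  let ?k = "nat (- x)" and ?d = "nat (int (length \<alpha>) - y)"
  show "nonlocal_step (orbit_conf \<alpha> 1 n) (x, y) = orbit_conf \<alpha> 0 n (x, y)"
  proof (cases "nonlocal_fires (orbit_conf \<alpha> 1 n) x y")
    case True
    then have "x \<le> 0 \<and> y \<le> int (length \<alpha>) \<and> ?d = col_height \<alpha> ?k \<and> odd (collatz_orbit \<alpha> ?k)
        \<and> n = ?d + ?k"
      using orbit_conf_fires_iff by blast
    with True show ?thesis by (simp add: nonlocal_step_eq orbit_conf_def orbit_cell_bottom)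
  next
    case False
    have "orbit_cell \<alpha> 0 n ?k ?d = orbit_cell \<alpha> 1 n ?k ?d" if "x \<le> 0" "y \<le> int (length \<alpha>)"
    proof (rule ccontr)
      assume "orbit_cell \<alpha> 0 n ?k ?d \<noteq> orbit_cell \<alpha> 1 n ?k ?d"
      then have "nonlocal_fires (orbit_conf \<alpha> 1 n) x y"
        using orbit_cell_phases_differ orbit_conf_fires_iff that by blast
      with False show False by contradiction
    qed
    then show ?thesis using False by (auto simp: nonlocal_step_eq orbit_conf_def)
  qed
qed

lemma orbit_conf_initial: "orbit_conf \<alpha> 1 0 = c0 \<alpha>"
proof (rule ext, clarify)
  fix x y :: int
  let ?L = "int (length \<alpha>)"
  show "orbit_conf \<alpha> 1 0 (x, y) = c0 \<alpha> (x, y)"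
  proof (cases "0 < x \<or> ?L < y")
    case True
    then show ?thesis by (auto simp: orbit_conf_def c0_def)
  next
    case False
    consider "x = 0" "1 \<le> y" | "x = 0" "y < 1" | "x < 0" "y = ?L" | "x < 0" "y < ?L"
      using False by linarith
    then show ?thesis
    proof cases
      case 1
      then have "nat (?L - y) < col_height \<alpha> 0" "length \<alpha> - 1 - nat (?L - y) = nat (y - 1)"
        using False by auto
      then show ?thesis using 1 False
        by (auto simp: orbit_conf_def c0_def orbit_cell_inside enc_def)
    next
      case 2
      then show ?thesis by (auto simp: orbit_conf_def c0_def orbit_cell_def)
    next
      case 3
      then obtain j where "nat (- x) = Suc j" using not0_implies_Suc by fastforce
      then show ?thesis
        using 3 col_height_pos sum_bit_top[of \<alpha> j] by (simp add: orbit_conf_def c0_def orbit_cell_inside)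
    next
      case 4
      then show ?thesis by (auto simp: orbit_conf_def c0_def orbit_cell_def)
    qed
  qed
qed

lemma cqca_orbit: "(cqca_step ^^ n) (c0 \<alpha>) = orbit_conf \<alpha> 1 n"
proof (induction n)
  case 0
  then show ?case using orbit_conf_initial by simp
next
  case (Suc n)
  have "(cqca_step ^^ Suc n) (c0 \<alpha>) = local_step (nonlocal_step (orbit_conf \<alpha> 1 n))"
    by (simp only: funpow.simps(2) comp_apply Suc.IH cqca_step_def)
  also have "\<dots> = orbit_conf \<alpha> 1 (Suc n)"
    by (simp only: nonlocal_step_orbit_conf local_step_orbit_conf)
  finally show ?case .
qed

end

section \<open>The limit configuration\<close>

lemma the_eventual_value:
  fixes f :: "nat \<Rightarrow> 'a"
  assumes "\<forall>n\<ge>n0. f n = w"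
  shows "(THE v. \<exists>n0. \<forall>n\<ge>n0. f n = v) = w"
proof (rule the_equality)
  show "\<exists>n0. \<forall>n\<ge>n0. f n = w" using assms by blast
next
  fix v assume "\<exists>n1. \<forall>n\<ge>n1. f n = v"
  then obtain n1 where "\<forall>n\<ge>n1. f n = v" by blast
  then have "f (max n0 n1) = v" by (metis max.cobounded2)
  moreover have "f (max n0 n1) = w" using assms by (metis max.cobounded1)
  ultimately show "v = w" by simp
qed

definition limit_cell :: "nat list \<Rightarrow> nat \<Rightarrow> nat \<Rightarrow> cell" where
  "limit_cell \<alpha> k d =
    (if d < col_height \<alpha> k then (Some (fst (column \<alpha> k d)), Some (snd (column \<alpha> k d)))
     else if d = col_height \<alpha> k then (Some 0, if odd (collatz_orbit \<alpha> k) then Some 1 else None)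
     else (None, None))"

context base3_word
begin

lemma c_inf_eq_limit_cell:
  assumes "x < 0"
  shows "c_inf \<alpha> (x, y) = (if int (length \<alpha>) < y then (None, None)
     else limit_cell \<alpha> (nat (- x)) (nat (int (length \<alpha>) - y)))"
  unfolding c_inf_def cqca_orbit
proof (rule the_eventual_value, intro allI impI)
  fix n assume "nat (int (length \<alpha>) - y) + nat (- x) + 1 \<le> n"
  then show "orbit_conf \<alpha> 1 n (x, y) = (if int (length \<alpha>) < y then (None, None)
     else limit_cell \<alpha> (nat (- x)) (nat (int (length \<alpha>) - y)))"
    using assms by (auto simp: orbit_conf_def orbit_cell_def limit_cell_def)
qed

end

lemma horner3_eq_sum_over_column:
  fixes L :: int
  shows "(\<Sum>y\<in>{L - int D<..L}. f (nat (L - y)) * 3 ^ nat (y - (L - int D) - 1)) = horner3 f D"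
  unfolding horner3_eq_sum
proof (rule sum.reindex_bij_witness[where i = "\<lambda>d. L - int d" and j = "\<lambda>y. nat (L - y)"])
  fix y assume "y \<in> {L - int D<..L}"
  then have "nat (y - (L - int D) - 1) = D - 1 - nat (L - y)" by auto
  then show "f (nat (L - y)) * 3 ^ (D - 1 - nat (L - y)) = f (nat (L - y)) * 3 ^ nat (y - (L - int D) - 1)"
    by simp
qed auto

theorem mainTheorem3:
  fixes z :: nat and \<alpha> :: "nat list" and x0 :: int
  assumes "z \<ge> 1"
    and "\<forall>d\<in>set \<alpha>. d < 3" and "\<alpha> \<noteq> []" and "last \<alpha> \<noteq> 0" and "val3 \<alpha> = z"
    and "x0 < 0"
  shows "\<exists>yb::int. yb \<le> int (length \<alpha>)
     \<and> (\<forall>y<yb. fst (c_inf \<alpha> (x0, y)) = None)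
     \<and> fst (c_inf \<alpha> (x0, yb)) = Some 0
     \<and> (\<forall>y. yb < y \<and> y \<le> int (length \<alpha>) \<longrightarrow>
            fst (c_inf \<alpha> (x0, y)) \<noteq> None \<and> snd (c_inf \<alpha> (x0, y)) \<noteq> None)
     \<and> (\<Sum>y\<in>{yb<..int (length \<alpha>)}. tval (c_inf \<alpha> (x0, y)) * 3 ^ nat (y - yb - 1))
         = (collatzT ^^ nat (- x0)) z"
proof -
  interpret base3_word \<alpha> using assms(2,3) by unfold_locales
  let ?L = "int (length \<alpha>)" and ?k = "nat (- x0)"
  define yb where "yb = ?L - int (col_height \<alpha> ?k)"
  have cell: "c_inf \<alpha> (x0, y) = (if ?L < y then (None, None) else limit_cell \<alpha> ?k (nat (?L - y)))" for y
    using c_inf_eq_limit_cell[OF assms(6)] .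
  have "length \<alpha> \<le> col_height \<alpha> ?k" by (rule col_height_ge)
  then have "yb \<le> ?L" and "\<forall>y<yb. fst (c_inf \<alpha> (x0, y)) = None" and "fst (c_inf \<alpha> (x0, yb)) = Some 0"
    by (auto simp: cell limit_cell_def yb_def)
  moreover have defined: "c_inf \<alpha> (x0, y)
      = (Some (fst (column \<alpha> ?k (nat (?L - y)))), Some (snd (column \<alpha> ?k (nat (?L - y)))))"
    if "yb < y" "y \<le> ?L" for y
    using that by (auto simp: cell limit_cell_def yb_def)
  moreover have "(\<Sum>y\<in>{yb<..?L}. tval (c_inf \<alpha> (x0, y)) * 3 ^ nat (y - yb - 1))
      = (\<Sum>y\<in>{yb<..?L}. column_trits \<alpha> ?k (nat (?L - y)) * 3 ^ nat (y - yb - 1))"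
    by (rule sum.cong) (auto simp: defined tval_def column_trits_below yb_def)
  moreover have "\<dots> = (collatzT ^^ nat (- x0)) z"
    using horner3_eq_sum_over_column[where L = ?L and D = "col_height \<alpha> ?k"] horner3_column assms(5)
    by (simp add: yb_def)
  ultimately show ?thesis by auto
qed

end
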